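(* Let $a,b,c$ be nonnegative integers such that $s=a+b+c-d$ is positive. Then in $\mathcal{B}_d$: $$f^{(a)}\binom{H_2}{b}e^{(c)}=\sum_{k=s}^{\min(a,c)}(-1)^{k-s}\binom{k-1}{s-1}\binom{b+k}{k}f^{(a-k)}\binom{H_2}{b+k}e^{(c-k)},$$ $$e^{(a)}\binom{H_1}{b}f^{(c)}=\sum_{k=s}^{\min(a,c)}(-1)^{k-s}\binom{k-1}{s-1}\binom{b+k}{k}e^{(a-k)}\binom{H_1}{b+k}f^{(c-k)}$$ (an empty sum being $0$).
   Context: Fix an integer $d\ge 0$. $\mathcal{B}_d$ is the associative $\mathbb{Q}$-algebra with $1$ generated by $e,f,H_1,H_2$ subject to the relations $H_1H_2=H_2H_1$, $H_1e-eH_1=e$, $H_1f-fH_1=-f$, $H_2e-eH_2=-e$, $H_2f-fH_2=f$, $ef-fe=H_1-H_2$, $H_1+H_2=d$, and $H_1(H_1-1)\cdots(H_1-d)=0$. For an element $T$ and integer $m\ge 0$, $T^{(m)}=T^m/m!$ and $\binom{T}{m}=T(T-1)\cdots(T-m+1)/m!$; both are defined to be $0$ for negative $m$. *)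

theory Defs
  imports Main
begin

text \<open>A unital ring is a Q-algebra iff every positive natural number is invertible
  (the map Q -> A is then unique and lands in the centre).\<close>
definition rat_algebra :: "'a::ring_1 itself \<Rightarrow> bool" where
  "rat_algebra _ \<longleftrightarrow> (\<forall>n::nat. n > 0 \<longrightarrow>
     (\<exists>y::'a. of_nat n * y = 1 \<and> y * of_nat n = 1))"

definition nat_inv :: "nat \<Rightarrow> 'a::ring_1" where
  "nat_inv n = (SOME y. of_nat n * y = 1 \<and> y * of_nat n = 1)"

definition dpow :: "'a::ring_1 \<Rightarrow> nat \<Rightarrow> 'a" where
  "dpow T m = nat_inv (fact m) * T ^ m"

definition binomT :: "'a::ring_1 \<Rightarrow> nat \<Rightarrow> 'a" where
  "binomT T m = nat_inv (fact m) * prod_list (map (\<lambda>i. T - of_nat i) [0..<m])"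

definition Bd_rel :: "nat \<Rightarrow> 'a::ring_1 \<Rightarrow> 'a \<Rightarrow> 'a \<Rightarrow> 'a \<Rightarrow> bool" where
  "Bd_rel d e f H1 H2 \<longleftrightarrow>
     H1 * H2 = H2 * H1 \<and>
     H1 * e - e * H1 = e \<and> H1 * f - f * H1 = - f \<and>
     H2 * e - e * H2 = - e \<and> H2 * f - f * H2 = f \<and>
     e * f - f * e = H1 - H2 \<and> H1 + H2 = of_nat d \<and>
     prod_list (map (\<lambda>i. H1 - of_nat i) [0..<Suc d]) = 0"

end

theory Submission
  imports Defs "HOL-Computational_Algebra.Formal_Power_Series"
begin

(* Both identities are checked on weight vectors w, H1 w = m w: these separate the elements of
   the algebra, because H1 is annihilated by a polynomial with the simple integer roots 0, ..., d,
   and weight vectors of weight outside [0, d] vanish.  On a weight vector the binomials in H2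
   act by scalars, so both sides become combinations of the vectors w_k = f^(a-k) e^(c-k) w.
   These satisfy the relations sum_j (-1)^j C(N+j, j) f^(x-j) e^(y-j) w = 0 whenever
   N = d - m - y and x > m: for w = e^(p) u with u a lowest weight vector this follows from Vandermonde's
   identity when p = 0 and by commuting e through the relation for larger p, and every weight
   vector is a sum of such vectors.  Solving this triangular system for w_0 produces the
   coefficients (-1)^(k-s) C(k-1, s-1).  The second identity is the first one for the
   quadruple (f, e, H2, H1). *)

section \<open>Arithmetic in a \<open>\<rat>\<close>-algebra\<close>

lemma nat_inv_Suc_0 [simp]: "nat_inv (Suc 0) = (1::'a::ring_1)"
  unfolding nat_inv_def by simp

lemma nat_inv_inverse:
  assumes "rat_algebra TYPE('a::ring_1)" and "0 < n"
  shows "of_nat n * (nat_inv n :: 'a) = 1" and "(nat_inv n :: 'a) * of_nat n = 1"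
proof -
  have "\<exists>y::'a. of_nat n * y = 1 \<and> y * of_nat n = 1"
    using assms unfolding rat_algebra_def by blast
  then have "of_nat n * (nat_inv n :: 'a) = 1 \<and> (nat_inv n :: 'a) * of_nat n = 1"
    unfolding nat_inv_def by (rule someI_ex)
  then show "of_nat n * (nat_inv n :: 'a) = 1" and "(nat_inv n :: 'a) * of_nat n = 1"
    by auto
qed

lemma nat_inv_unique:
  assumes "rat_algebra TYPE('a::ring_1)" and "0 < n" and "of_nat n * y = (1::'a)"
  shows "nat_inv n = y"
  by (metis assms mult.assoc mult_1_left mult_1_right nat_inv_inverse(2))

lemma nat_inv_commute:
  assumes "rat_algebra TYPE('a::ring_1)" and "0 < n"
  shows "(nat_inv n :: 'a) * x = x * nat_inv n"
proof -
  let ?y = "nat_inv n :: 'a"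
  have "?y * x = ?y * (x * of_nat n) * ?y"
    by (simp add: mult.assoc nat_inv_inverse[OF assms])
  also have "\<dots> = (?y * of_nat n) * x * ?y"
    by (simp add: mult_of_nat_commute mult.assoc)
  finally show ?thesis
    by (simp add: nat_inv_inverse[OF assms])
qed

lemma nat_inv_left_commute:
  assumes "rat_algebra TYPE('a::ring_1)" and "0 < n"
  shows "x * ((nat_inv n :: 'a) * y) = nat_inv n * (x * y)"
  by (simp only: mult.assoc[symmetric] nat_inv_commute[OF assms, of x, symmetric])

lemma nat_inv_mult_of_nat_mult:
  assumes "rat_algebra TYPE('a::ring_1)" and "0 < n"
  shows "(nat_inv n :: 'a) * (of_nat n * y) = y"
  by (simp only: mult.assoc[symmetric] nat_inv_inverse(2)[OF assms] mult_1_left)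

lemma rat_algebra_of_int_mult_eq_0_iff:
  assumes "rat_algebra TYPE('a::ring_1)" and "z \<noteq> 0"
  shows "of_int z * (w::'a) = 0 \<longleftrightarrow> w = 0"
proof
  assume "of_int z * w = 0"
  moreover obtain n where n: "0 < n" "z = int n \<or> z = - int n"
    using assms(2) by (cases z rule: int_cases3) auto
  ultimately have "of_nat n * w = 0"
    by (elim disjE) simp_all
  then have "nat_inv n * (of_nat n * w) = 0"
    by simp
  then show "w = 0"
    by (simp only: mult.assoc[symmetric] nat_inv_inverse(2)[OF assms(1) n(1)] mult_1_left)
qed simp

lemma rat_algebra_of_nat_mult_eq_0_iff:
  assumes "rat_algebra TYPE('a::ring_1)" and "0 < n"
  shows "of_nat n * (w::'a) = 0 \<longleftrightarrow> w = 0"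
  using rat_algebra_of_int_mult_eq_0_iff[OF assms(1), of "int n" w] assms(2) by simp

lemma rat_algebra_of_nat_mult_cancel:
  assumes "rat_algebra TYPE('a::ring_1)" and "0 < n" and "of_nat n * x = of_nat n * (y::'a)"
  shows "x = y"
  using assms rat_algebra_of_nat_mult_eq_0_iff[OF assms(1,2), of "x - y"]
  by (simp add: right_diff_distrib)

lemma dpow_0 [simp]: "dpow T 0 = (1::'a::ring_1)"
  by (simp add: dpow_def)

lemma dpow_Suc_0 [simp]: "dpow T (Suc 0) = (T::'a::ring_1)"
  by (simp add: dpow_def)

lemma mult_dpow:
  assumes "rat_algebra TYPE('a::ring_1)"
  shows "(T::'a) * dpow T n = of_nat (Suc n) * dpow T (Suc n)"
proof -
  have "of_nat (fact n) * (of_nat (Suc n) * nat_inv (fact (Suc n))) = (1::'a)"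
    using nat_inv_inverse(1)[OF assms fact_gt_zero, of "Suc n"]
    by (simp only: mult.assoc[symmetric] of_nat_mult[symmetric] fact_Suc of_nat_id mult.commute)
  then have inv: "nat_inv (fact n) = of_nat (Suc n) * (nat_inv (fact (Suc n)) :: 'a)"
    using assms by (intro nat_inv_unique) simp_all
  have "T * dpow T n = nat_inv (fact n) * T * T ^ n"
    unfolding dpow_def using nat_inv_commute[OF assms, of "fact n" T]
    by (simp only: mult.assoc[symmetric] fact_gt_zero)
  also have "\<dots> = of_nat (Suc n) * dpow T (Suc n)"
    unfolding dpow_def inv by (simp only: mult.assoc power_Suc)
  finally show ?thesis .
qed

lemma dpow_commute:
  assumes "rat_algebra TYPE('a::ring_1)"
  shows "dpow T n * T = (T::'a) * dpow T n"
proof -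
  have "dpow T n * T = (nat_inv (fact n) * T) * T ^ n"
    unfolding dpow_def by (simp only: mult.assoc power_commutes)
  also have "\<dots> = T * dpow T n"
    unfolding dpow_def by (simp only: nat_inv_commute[OF assms fact_gt_zero] mult.assoc)
  finally show ?thesis .
qed

lemma mult_of_int_left_commute: "(x::'a::ring_1) * (of_int c * y) = of_int c * (x * y)"
  by (metis mult.assoc mult_of_int_commute)

lemma mult_of_nat_left_commute: "(x::'a::ring_1) * (of_nat c * y) = of_nat c * (x * y)"
  using mult_of_int_left_commute[of x "int c" y] by simp

lemma of_int_mult_of_int_mult: "of_int a * (of_int b * v) = (of_int (a * b) :: 'a::ring_1) * v"
  by (simp only: of_int_mult mult.assoc)

lemma of_int_mult_add: "of_int a * v + of_int b * v = (of_int (a + b) :: 'a::ring_1) * v"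
  by (simp only: of_int_add distrib_right)

lemma of_int_mult_diff: "of_int a * v - of_int b * v = (of_int (a - b) :: 'a::ring_1) * v"
  by (simp only: of_int_diff left_diff_distrib)

lemma of_int_mult_cong: "a = b \<Longrightarrow> of_int a * v = (of_int b :: 'a::ring_1) * v"
  by simp

lemma of_nat_mult_eq_of_int_mult: "of_nat n * v = (of_int (int n) :: 'a::ring_1) * v"
  by simp

lemma prod_list_falling_eigen:
  fixes H v :: "'a::ring_1"
  assumes "H * v = of_int z * v"
  shows "prod_list (map (\<lambda>i. H - of_nat i) [0..<b]) * v = of_int (\<Prod>i<b. z - int i) * v"
proof (induction b)
  case (Suc b)
  have "(H - of_nat b) * v = of_int (z - int b) * v"
    using assms by (simp add: algebra_simps)
  then have "prod_list (map (\<lambda>i. H - of_nat i) [0..<Suc b]) * v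
      = of_int (z - int b) * (prod_list (map (\<lambda>i. H - of_nat i) [0..<b]) * v)"
    by (simp only: upt_Suc_append[OF le0] map_append prod_list.append list.map prod_list.Cons
        prod_list.Nil mult_1_right mult.assoc mult_of_int_left_commute)
  then show ?case
    by (simp add: Suc.IH mult.assoc[symmetric] mult.commute)
qed simp

lemma prod_falling_of_nat:
  "(of_int (\<Prod>i<b. int N - int i) :: 'a::ring_1) = of_nat (fact b) * of_nat (N choose b)"
proof -
  have "(of_int (\<Prod>i<b. int N - int i) :: rat) = (\<Prod>i=0..<b. of_nat N - of_nat i)"
    by (simp add: atLeast0LessThan)
  also have "\<dots> = of_int (int (fact b * (N choose b)))"
    by (simp add: gbinomial_mult_fact binomial_gbinomial)
  finally have "(\<Prod>i<b. int N - int i) = int (fact b * (N choose b))"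
    by (simp only: of_int_eq_iff)
  then show ?thesis
    by (metis of_int_of_nat_eq of_nat_mult)
qed

lemma binomT_eigen:
  fixes H v :: "'a::ring_1"
  assumes "rat_algebra TYPE('a)" and "H * v = of_nat N * v"
  shows "binomT H b * v = of_nat (N choose b) * v"
proof -
  have "binomT H b * v = nat_inv (fact b) * (of_nat (fact b) * (of_nat (N choose b) * v))"
    using prod_list_falling_eigen[of H v "int N" b] assms(2)
    by (simp only: binomT_def mult.assoc prod_falling_of_nat of_int_of_nat_eq)
  then show ?thesis
    by (simp only: mult.assoc[symmetric] nat_inv_inverse(2)[OF assms(1) fact_gt_zero] mult_1_left)
qed

lemma falling_factors_commute:
  fixes H :: "'a::ring_1"
  shows "(H - of_nat u) * (H - of_nat w) = (H - of_nat w) * (H - of_nat u)"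
  by (simp add: algebra_simps mult_of_nat_commute[of _ H, symmetric] flip: of_nat_mult)

lemma falling_factor_commute:
  fixes H :: "'a::ring_1"
  shows "(H - of_nat u) * prod_list (map (\<lambda>i. H - of_nat i) L)
       = prod_list (map (\<lambda>i. H - of_nat i) L) * (H - of_nat u)"
proof (induction L)
  case (Cons l L)
  then show ?case
    by (simp only: list.map prod_list.Cons mult.assoc[symmetric] falling_factors_commute[of H u l])
      (simp only: mult.assoc Cons.IH)
qed simp

lemma annihilates_falling_kernel:
  fixes H X :: "'a::ring_1"
  assumes "rat_algebra TYPE('a)" and kills: "\<And>z w. H * w = of_int z * w \<Longrightarrow> X * w = 0"
  shows "distinct L \<Longrightarrow> prod_list (map (\<lambda>i. H - of_nat i) L) * v = 0 \<Longrightarrow> X * v = 0"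
proof (induction "length L" arbitrary: L v rule: less_induct)
  case less
  let ?Q = "\<lambda>L. prod_list (map (\<lambda>i. H - of_nat i) L)"
  consider "L = []" | u where "L = [u]" | u w L' where "L = u # w # L'"
    by (cases L rule: remdups_adj.cases) auto
  then show ?case
  proof cases
    case 1
    with less.prems show ?thesis by simp
  next
    case (2 u)
    with less.prems have "H * v = of_int (int u) * v"
      by (simp add: algebra_simps)
    then show ?thesis by (rule kills)
  next
    case (3 u w L')
    (* (H - u) v and (H - w) v lie in kernels of shorter products and differ by (u - w) v. *)
    have "?Q (w # L') * ((H - of_nat u) * v) = (H - of_nat w) * (?Q L' * (H - of_nat u)) * v"
      by (simp add: mult.assoc)
    also have "\<dots> = ?Q L * v"
      using 3 by (simp only: falling_factor_commute[symmetric] falling_factors_commute[of H w u]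
          list.map prod_list.Cons mult.assoc[symmetric])
    finally have u: "X * ((H - of_nat u) * v) = 0"
      using less 3 by (intro less.hyps[of "w # L'"]) auto
    have "?Q (u # L') * ((H - of_nat w) * v) = (H - of_nat u) * (?Q L' * (H - of_nat w)) * v"
      by (simp add: mult.assoc)
    also have "\<dots> = ?Q L * v"
      using 3 by (simp only: falling_factor_commute[symmetric] list.map prod_list.Cons mult.assoc)
    finally have w: "X * ((H - of_nat w) * v) = 0"
      using less 3 by (intro less.hyps[of "u # L'"]) auto
    have "of_int (int u - int w) * (X * v) = X * ((H - of_nat w) * v) - X * ((H - of_nat u) * v)"
      by (simp add: algebra_simps mult_of_nat_left_commute)
    also have "\<dots> = 0"
      by (simp only: u w diff_self)
    finally show ?thesis
      using 3 less.prems(1) rat_algebra_of_int_mult_eq_0_iff[OF assms(1), of "int u - int w"] by simp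
  qed
qed

section \<open>Binomial identities\<close>

(* The coefficient of t^j in (1 + t)^-(N+1). *)
definition negbin_coeff :: "nat \<Rightarrow> nat \<Rightarrow> int" where
  "negbin_coeff N j = (-1) ^ j * int ((N + j) choose j)"

lemma negbin_coeff_Suc:
  "- (int (Suc j) * negbin_coeff N (Suc j)) = int (Suc N) * negbin_coeff (Suc N) j"
proof -
  have "Suc j * ((N + Suc j) choose Suc j) = Suc N * ((Suc N + j) choose j)"
    using Suc_times_binomial_add[of j N] by (simp only: add_Suc_right add_Suc add.commute)
  then have "int (Suc j) * int ((N + Suc j) choose Suc j) = int (Suc N) * int ((Suc N + j) choose j)"
    by (simp only: of_nat_mult[symmetric])
  then have "(-1) ^ j * (int (Suc j) * int ((N + Suc j) choose Suc j))
      = (-1) ^ j * (int (Suc N) * int ((Suc N + j) choose j))"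
    by (rule arg_cong)
  then show ?thesis
    unfolding negbin_coeff_def by (simp only: power_Suc mult_ac mult_minus1 minus_minus mult_minus_left)
qed

lemma negbin_coeff_gchoose: "of_int (negbin_coeff N j) = ((- of_nat (Suc N)) gchoose j :: rat)"
proof -
  have "((- of_nat (Suc N)) gchoose j :: rat) = (-1) ^ j * ((of_nat (Suc N) + of_nat j - 1) gchoose j)"
    by (rule gbinomial_minus)
  also have "of_nat (Suc N) + of_nat j - 1 = (of_nat (N + j) :: rat)"
    by simp
  finally show ?thesis
    by (simp add: negbin_coeff_def binomial_gbinomial)
qed

lemma negbin_coeff_vandermonde:
  assumes "Suc N \<le> A" and "A < Suc N + x"
  shows "(\<Sum>j\<le>x. negbin_coeff N j * int (A choose (x - j))) = 0"
proof -
  have "(of_int (\<Sum>j\<le>x. negbin_coeff N j * int (A choose (x - j))) :: rat)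
      = (\<Sum>j=0..x. ((- of_nat (Suc N)) gchoose j) * (of_nat A gchoose (x - j)))"
    by (simp add: negbin_coeff_gchoose binomial_gbinomial atMost_atLeast0)
  also have "\<dots> = (- of_nat (Suc N) + of_nat A) gchoose x"
    by (rule gbinomial_Vandermonde)
  also have "- of_nat (Suc N) + of_nat A = (of_nat (A - Suc N) :: rat)"
    using assms(1) by simp
  also have "(of_nat (A - Suc N) gchoose x :: rat) = of_nat ((A - Suc N) choose x)"
    by (rule binomial_gbinomial[symmetric])
  also have "(A - Suc N) choose x = 0"
    using assms by simp
  finally show ?thesis
    by (simp only: of_nat_0 of_int_eq_0_iff)
qed

lemma choose_mult_shift: "(N choose b) * ((N + k) choose k) = ((b + k) choose k) * ((N + k) choose (b + k))"
proof (cases "b \<le> N")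
  case True
  have "((N + k) choose (b + k)) * ((b + k) choose k) = ((N + k) choose k) * ((N + k - k) choose (b + k - k))"
    by (rule choose_mult) (use True in auto)
  then show ?thesis
    by (simp add: mult.commute)
qed (simp add: binomial_eq_0)

lemma choose_mult_cross:
  assumes "s \<le> k"
  shows "((N + s) choose s) * ((N + k) choose (k - s)) = (k choose s) * ((N + k) choose k)"
proof -
  have "((N + k) choose (N + s)) * ((N + s) choose s) = ((N + k) choose s) * ((N + k - s) choose (N + s - s))"
    by (rule choose_mult) (use assms in auto)
  moreover have "((N + k) choose k) * (k choose s) = ((N + k) choose s) * ((N + k - s) choose (k - s))"
    by (rule choose_mult) (use assms in auto)
  moreover have "(N + k) choose (N + s) = (N + k) choose (k - s)"
    using binomial_symmetric[of "N + s" "N + k"] assms by simp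
  moreover have "(N + k - s) choose (k - s) = (N + k - s) choose N"
    using binomial_symmetric[of "k - s" "N + k - s"] assms by simp
  ultimately show ?thesis
    by (simp add: mult.commute)
qed

definition inversion_coeff :: "nat \<Rightarrow> nat \<Rightarrow> nat \<Rightarrow> int" where
  "inversion_coeff N s k = (-1) ^ (k - s) * int ((k - 1) choose (s - 1)) * int ((N + k) choose k)"

lemma inversion_coeff_Suc:
  assumes "0 < s" and "s < k"
  shows "inversion_coeff N s k - int ((N + s) choose s) * ((-1) ^ (k - s) * int ((N + k) choose (k - s)))
       = inversion_coeff N (Suc s) k"
proof -
  have "int ((N + s) choose s) * int ((N + k) choose (k - s))
      = (int ((k - 1) choose (s - 1)) + int ((k - 1) choose s)) * int ((N + k) choose k)"
    using choose_mult_cross[of s k N] binomial_Suc_Suc[of "k - 1" "s - 1"] assms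
    by (simp flip: of_nat_mult of_nat_add)
  moreover have "k - s = Suc (k - Suc s)"
    using assms by simp
  then have "(-1) ^ (k - s) = - ((-1) ^ (k - Suc s) :: int)"
    by simp
  moreover have "\<And>A B a b c x y :: int. x * y = (a + b) * c \<Longrightarrow> A = - B
      \<Longrightarrow> A * a * c - x * (A * y) = B * b * c"
    by algebra
  ultimately show ?thesis
    unfolding inversion_coeff_def diff_Suc_1 by blast
qed

lemma triangular_inversion_step:
  fixes w :: "nat \<Rightarrow> 'a::ring_1"
  assumes "0 < s" and "s \<le> M"
    and w0: "w 0 = (\<Sum>k=s..M. of_int (inversion_coeff N s k) * w k)"
    and rel: "(\<Sum>k=s..M. of_int ((-1) ^ (k - s) * int ((N + k) choose (k - s))) * w k) = 0"
  shows "w 0 = (\<Sum>k=Suc s..M. of_int (inversion_coeff N (Suc s) k) * w k)"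
proof -
  let ?r = "\<lambda>k. of_int ((-1) ^ (k - s) * int ((N + k) choose (k - s)))"
  have "w 0 = of_nat ((N + s) choose s) * w s + (\<Sum>k=Suc s..M. of_int (inversion_coeff N s k) * w k)"
    using w0 \<open>s \<le> M\<close> by (simp add: sum.atLeast_Suc_atMost inversion_coeff_def)
  also have "w s = - (\<Sum>k=Suc s..M. ?r k * w k)"
    using rel \<open>s \<le> M\<close> by (simp add: sum.atLeast_Suc_atMost eq_neg_iff_add_eq_0)
  also have "of_nat ((N + s) choose s) * - (\<Sum>k=Suc s..M. ?r k * w k)
      + (\<Sum>k=Suc s..M. of_int (inversion_coeff N s k) * w k)
      = (\<Sum>k=Suc s..M. of_int (inversion_coeff N (Suc s) k) * w k)"
    unfolding sum_distrib_left mult_minus_right sum_negf[symmetric] sum.distrib[symmetric]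
  proof (rule sum.cong[OF refl])
    fix k
    assume "k \<in> {Suc s..M}"
    then have "inversion_coeff N (Suc s) k
        = inversion_coeff N s k - int ((N + s) choose s) * ((-1) ^ (k - s) * int ((N + k) choose (k - s)))"
      using \<open>0 < s\<close> by (simp add: inversion_coeff_Suc)
    then show "- (of_nat ((N + s) choose s) * (?r k * w k)) + of_int (inversion_coeff N s k) * w k
        = of_int (inversion_coeff N (Suc s) k) * w k"
      by (simp only: of_nat_mult_eq_of_int_mult of_int_mult_of_int_mult minus_mult_left
          of_int_minus[symmetric] of_int_mult_add) (rule of_int_mult_cong, simp)
  qed
  finally show ?thesis .
qed

lemma triangular_inversion:
  fixes w :: "nat \<Rightarrow> 'a::ring_1"
  assumes "0 < s"
    and rel: "\<And>i. i < s \<Longrightarrow> (\<Sum>k=i..M. of_int ((-1) ^ (k - i) * int ((N + k) choose (k - i))) * w k) = 0"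
  shows "w 0 = (\<Sum>k=s..M. of_int (inversion_coeff N s k) * w k)"
  using assms
proof (induction s rule: nat_induct_non_zero)
  case 1
  let ?T = "\<Sum>k=1..M. of_int ((-1) ^ k * int ((N + k) choose k)) * w k"
  have "w 0 + ?T = 0"
    using 1 by (simp add: sum.atLeast_Suc_atMost)
  then have "w 0 = - ?T"
    by (simp add: eq_neg_iff_add_eq_0)
  also have "?T = - (\<Sum>k=1..M. of_int (inversion_coeff N 1 k) * w k)"
    unfolding sum_negf[symmetric]
    by (intro sum.cong refl) (auto simp: inversion_coeff_def Suc_le_eq gr0_conv_Suc)
  finally show ?case
    by simp
next
  case (Suc s)
  show ?case
  proof (cases "s \<le> M")
    case True
    with Suc show ?thesis
      by (intro triangular_inversion_step) simp_all
  qed (use Suc in simp)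
qed

section \<open>Weight vectors\<close>

(* The two consequences of the polynomial relation on H1 that are used below; unlike Bd_rel,
   they are visibly invariant under (e, f, H1, H2) \<mapsto> (f, e, H2, H1). *)
locale sl2_bounded =
  fixes e f H1 H2 :: "'a::ring_1" and d :: nat
  assumes rat_algebra: "rat_algebra TYPE('a)"
    and H1_e: "H1 * e - e * H1 = e"
    and H1_f: "H1 * f - f * H1 = - f"
    and e_f: "e * f - f * e = H1 - H2"
    and H1_H2: "H1 + H2 = of_nat d"
    and weight_range: "H1 * w = of_int z * w \<Longrightarrow> z < 0 \<or> int d < z \<Longrightarrow> w = 0"
    and weight_vectors_separate: "(\<And>z w. H1 * w = of_int z * w \<Longrightarrow> X * w = 0) \<Longrightarrow> X = 0"

lemma Bd_rel_sl2_bounded: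
  fixes e f H1 H2 :: "'a::ring_1"
  assumes ra: "rat_algebra TYPE('a)" and rel: "Bd_rel d e f H1 H2"
  shows "sl2_bounded e f H1 H2 d"
proof
  have vanish: "prod_list (map (\<lambda>i. H1 - of_nat i) [0..<Suc d]) = 0"
    using rel unfolding Bd_rel_def by blast
  show "rat_algebra TYPE('a)" by (fact ra)
  show "H1 * e - e * H1 = e" "H1 * f - f * H1 = - f" "e * f - f * e = H1 - H2" "H1 + H2 = of_nat d"
    using rel unfolding Bd_rel_def by blast+
  show "w = 0" if w: "H1 * w = of_int z * w" and z: "z < 0 \<or> int d < z" for w z
  proof -
    have "(\<Prod>i<Suc d. z - int i) \<noteq> 0"
      using z by auto
    moreover have "of_int (\<Prod>i<Suc d. z - int i) * w = 0"
      using prod_list_falling_eigen[OF w, of "Suc d"] vanish by simp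
    ultimately show ?thesis
      using rat_algebra_of_int_mult_eq_0_iff[OF ra] by blast
  qed
  show "X = 0" if "\<And>z w. H1 * w = of_int z * w \<Longrightarrow> X * w = 0" for X
  proof -
    have "distinct [0..<Suc d]" and "prod_list (map (\<lambda>i. H1 - of_nat i) [0..<Suc d]) * 1 = 0"
      using vanish by simp_all
    with ra that have "X * 1 = 0"
      by (rule annihilates_falling_kernel)
    then show ?thesis by simp
  qed
qed

context sl2_bounded
begin

lemma swapped_sl2_bounded: "sl2_bounded f e H2 H1 d"
proof
  have H1_eq: "H1 = of_nat d - H2"
    using H1_H2 by (simp add: algebra_simps)
  show "rat_algebra TYPE('a)" by (fact rat_algebra)
  show "H2 * f - f * H2 = f" "H2 * e - e * H2 = - e"
    using H1_e H1_f unfolding H1_eq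
    by (simp_all add: algebra_simps mult_of_nat_commute[of d f] mult_of_nat_commute[of d e])
  show "f * e - e * f = H2 - H1" "H2 + H1 = of_nat d"
    using e_f H1_H2 by (simp_all add: algebra_simps)
  have H2_weight: "H2 * w = of_int z * w \<longleftrightarrow> H1 * w = of_int (int d - z) * w" for w z
  proof -
    have "H1 * w = of_nat d * w - H2 * w"
      by (simp add: H1_eq left_diff_distrib)
    then show ?thesis
      by (simp add: left_diff_distrib)
  qed
  show "w = 0" if "H2 * w = of_int z * w" and "z < 0 \<or> int d < z" for w z
    using that weight_range[of w "int d - z"] H2_weight by auto
  show "X = 0" if "\<And>z w. H2 * w = of_int z * w \<Longrightarrow> X * w = 0" for X
  proof (rule weight_vectors_separate)
    fix z w
    assume "H1 * w = of_int z * w"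
    then have "H2 * w = of_int (int d - z) * w"
      by (subst H2_weight) simp
    then show "X * w = 0"
      by (rule that)
  qed
qed

definition weight_vector :: "int \<Rightarrow> 'a \<Rightarrow> bool" where
  "weight_vector z w \<longleftrightarrow> H1 * w = of_int z * w"

abbreviation E :: "nat \<Rightarrow> 'a" where "E \<equiv> dpow e"
abbreviation F :: "nat \<Rightarrow> 'a" where "F \<equiv> dpow f"

lemma weight_vector_eq_0: "weight_vector z w \<Longrightarrow> z < 0 \<or> int d < z \<Longrightarrow> w = 0"
  unfolding weight_vector_def by (rule weight_range)

lemma weight_vector_commuting:
  assumes "c * H1 = H1 * c" and "weight_vector z w"
  shows "weight_vector z (c * w)"
  using assms unfolding weight_vector_def by (metis mult.assoc mult_of_int_left_commute)

lemma weight_vector_diff: "weight_vector z v \<Longrightarrow> weight_vector z w \<Longrightarrow> weight_vector z (v - w)"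
  unfolding weight_vector_def by (simp add: right_diff_distrib)

lemma weight_vector_shift:
  assumes "H1 * x - x * H1 = of_int k * x" and "weight_vector z w"
  shows "weight_vector (z + k) (x * w)"
proof -
  have "H1 * x = x * H1 + of_int k * x"
    using assms(1) by (simp add: algebra_simps)
  then have "H1 * (x * w) = x * (H1 * w) + of_int k * (x * w)"
    by (simp add: mult.assoc[symmetric] distrib_right)
  also have "\<dots> = of_int (z + k) * (x * w)"
    using assms(2) unfolding weight_vector_def by (simp add: mult_of_int_left_commute distrib_right)
  finally show ?thesis
    unfolding weight_vector_def .
qed

lemma weight_vector_dpow:
  assumes x: "H1 * x - x * H1 = of_int k * x" and w: "weight_vector z w"
  shows "weight_vector (z + int n * k) (dpow x n * w)"
proof -
  have "weight_vector (z + int n * k) (x ^ n * w)"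
  proof (induction n)
    case (Suc n)
    have "weight_vector (z + int n * k + k) (x * (x ^ n * w))"
      by (rule weight_vector_shift[OF x Suc.IH])
    then show ?case
      by (simp add: algebra_simps)
  qed (simp add: w)
  then show ?thesis
    unfolding dpow_def mult.assoc
    by (rule weight_vector_commuting[OF nat_inv_commute[OF rat_algebra fact_gt_zero]])
qed

lemma weight_vector_E: "weight_vector z w \<Longrightarrow> weight_vector (z + int n) (E n * w)"
  using weight_vector_dpow[of e 1] H1_e by simp

lemma weight_vector_F: "weight_vector z w \<Longrightarrow> weight_vector (z - int n) (F n * w)"
  using weight_vector_dpow[of f "- 1"] H1_f by simp

lemma E_eq_0: "weight_vector z w \<Longrightarrow> int d < z + int n \<Longrightarrow> E n * w = 0"
  using weight_vector_E weight_vector_eq_0 by blast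

lemma F_eq_0: "weight_vector z w \<Longrightarrow> z < int n \<Longrightarrow> F n * w = 0"
  using weight_vector_F weight_vector_eq_0 by fastforce

lemma H2_weight_vector: "weight_vector z w \<Longrightarrow> H2 * w = of_int (int d - z) * w"
proof -
  have "H2 = of_nat d - H1"
    using H1_H2 by (simp add: algebra_simps)
  then show "weight_vector z w \<Longrightarrow> H2 * w = of_int (int d - z) * w"
    unfolding weight_vector_def by (simp add: left_diff_distrib)
qed

lemma e_E: "e * (E n * x) = of_nat (Suc n) * (E (Suc n) * x)"
  by (simp only: mult.assoc[symmetric] mult_dpow[OF rat_algebra])

lemma f_F: "f * (F n * x) = of_nat (Suc n) * (F (Suc n) * x)"
  by (simp only: mult.assoc[symmetric] mult_dpow[OF rat_algebra])

lemma of_int_mult_eq_0: "of_int c * x = 0 \<Longrightarrow> c \<noteq> 0 \<Longrightarrow> x = (0::'a)"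
  using rat_algebra_of_int_mult_eq_0_iff[OF rat_algebra] by blast

lemma of_nat_mult_eq_0: "of_nat n * x = 0 \<Longrightarrow> 0 < n \<Longrightarrow> x = (0::'a)"
  using rat_algebra_of_nat_mult_eq_0_iff[OF rat_algebra] by blast

lemma of_nat_mult_cancel: "0 < n \<Longrightarrow> of_nat n * x = of_nat n * y \<Longrightarrow> x = (y::'a)"
  by (rule rat_algebra_of_nat_mult_cancel[OF rat_algebra])

lemma e_f_weight_vector:
  assumes "weight_vector z v"
  shows "e * (f * v) = f * (e * v) + of_int (2 * z - int d) * v"
proof -
  have "e * f = f * e + (H1 - H2)"
    using e_f by (simp add: algebra_simps)
  then have "e * (f * v) = f * (e * v) + (H1 * v - H2 * v)"
    by (simp add: mult.assoc[symmetric] distrib_right left_diff_distrib)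
  also have "H1 * v - H2 * v = of_int (2 * z - int d) * v"
    using assms unfolding H2_weight_vector[OF assms] weight_vector_def
    by (simp only: of_int_mult_diff) (rule of_int_mult_cong, simp)
  finally show ?thesis .
qed

lemma e_F_weight_vector:
  assumes "weight_vector z w"
  shows "e * (F (Suc n) * w) = F (Suc n) * (e * w) + of_int (2 * z - int d - int n) * (F n * w)"
proof (induction n)
  case 0
  then show ?case
    using e_f_weight_vector[OF assms] by simp
next
  case (Suc n)
  let ?m = "Suc (Suc n)" and ?v = "F (Suc n) * w" and ?c = "2 * z - int d - int n"
  have v: "weight_vector (z - int (Suc n)) ?v"
    using assms by (rule weight_vector_F)
  have "of_nat ?m * (e * (F ?m * w)) = e * (f * ?v)"
    by (simp only: f_F mult_of_nat_left_commute)
  also have "\<dots> = f * (e * ?v) + of_int (2 * (z - int (Suc n)) - int d) * ?v"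
    by (rule e_f_weight_vector[OF v])
  also have "f * (e * ?v) = of_nat ?m * (F ?m * (e * w)) + of_int ?c * (of_nat (Suc n) * ?v)"
    by (simp only: Suc.IH distrib_left mult_of_int_left_commute f_F)
  also have "of_nat ?m * (F ?m * (e * w)) + of_int ?c * (of_nat (Suc n) * ?v)
      + of_int (2 * (z - int (Suc n)) - int d) * ?v
      = of_nat ?m * (F ?m * (e * w) + of_int (2 * z - int d - int (Suc n)) * ?v)"
    unfolding add.assoc distrib_left
    by (simp only: of_nat_mult_eq_of_int_mult of_int_mult_of_int_mult of_int_mult_add)
      (rule arg_cong[where f = "\<lambda>c. _ + of_int c * ?v"], simp add: algebra_simps)
  finally have "of_nat ?m * (e * (F ?m * w))
      = of_nat ?m * (F ?m * (e * w) + of_int (2 * z - int d - int (Suc n)) * ?v)" .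
  then show ?case
    by (rule of_nat_mult_cancel[rotated]) simp
qed

lemma f_E_weight_vector:
  assumes "weight_vector z w"
  shows "f * (E (Suc n) * w) = E (Suc n) * (f * w) + of_int (int d - 2 * z - int n) * (E n * w)"
proof -
  interpret swapped: sl2_bounded f e H2 H1 d
    by (rule swapped_sl2_bounded)
  have "swapped.weight_vector (int d - z) w"
    using H2_weight_vector[OF assms] unfolding swapped.weight_vector_def .
  then have "f * (E (Suc n) * w)
      = E (Suc n) * (f * w) + of_int (2 * (int d - z) - int d - int n) * (E n * w)"
    by (rule swapped.e_F_weight_vector)
  then show ?thesis
    by (simp add: algebra_simps)
qed

section \<open>Lowest weight vectors\<close>

context
  fixes u :: 'a and \<mu> :: int
  assumes f_u: "f * u = 0" and weight_u: "weight_vector \<mu> u"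
begin

lemma lowest_f_E: "f * (E (Suc y) * u) = of_int (int d - 2 * \<mu> - int y) * (E y * u)"
  using f_E_weight_vector[OF weight_u, of y] f_u by simp

lemma lowest_E_eq_0: "int d - 2 * \<mu> < int y \<Longrightarrow> E y * u = 0"
proof (induction "nat (int d - \<mu> + 1 - int y)" arbitrary: y)
  case 0
  then show ?case
    using E_eq_0[OF weight_u] by simp
next
  case (Suc k)
  then have "E (Suc y) * u = 0"
    by simp
  then have "of_int (int d - 2 * \<mu> - int y) * (E y * u) = 0"
    using lowest_f_E[of y] by simp
  then show ?case
    by (rule of_int_mult_eq_0) (use Suc.prems in simp)
qed

lemma lowest_F_E:
  "x \<le> y \<Longrightarrow> F x * (E y * u) = of_nat ((nat (int d - 2 * \<mu>) - (y - x)) choose x) * (E (y - x) * u)"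
proof (induction x)
  case (Suc x)
  let ?n = "nat (int d - 2 * \<mu>)" and ?k = "y - Suc x"
  have y: "y - x = Suc ?k"
    using Suc.prems by simp
  have "of_nat (Suc x) * (F (Suc x) * (E y * u)) = f * (F x * (E y * u))"
    by (simp only: f_F)
  also have "\<dots> = of_nat ((?n - Suc ?k) choose x) * of_int (int d - 2 * \<mu> - int ?k) * (E ?k * u)"
    using Suc.IH[OF Suc_leD[OF Suc.prems]]
    by (simp only: y mult_of_nat_left_commute[of f] lowest_f_E mult.assoc)
  also have "\<dots> = of_nat (Suc x) * (of_nat ((?n - ?k) choose Suc x) * (E ?k * u))"
  proof (cases "int d - 2 * \<mu> < int ?k")
    case True
    then show ?thesis
      using lowest_E_eq_0 by simp
  next
    case False
    then have "int d - 2 * \<mu> - int ?k = int (?n - ?k)"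
      by simp
    moreover have "((?n - Suc ?k) choose x) * (?n - ?k) = Suc x * ((?n - ?k) choose Suc x)"
      using binomial_absorption[of x "?n - ?k"] by (simp add: ac_simps)
    ultimately show ?thesis
      by (simp only: of_int_of_nat_eq of_nat_mult[symmetric] mult.assoc[symmetric])
  qed
  finally show ?case
    by (rule of_nat_mult_cancel[OF zero_less_Suc])
qed simp

lemma lowest_F_E_eq_0: "y < x \<Longrightarrow> F x * (E y * u) = 0"
proof (induction x)
  case (Suc x)
  have "f * (F x * (E y * u)) = 0"
  proof (cases "y < x")
    case True
    then show ?thesis
      using Suc.IH by simp
  next
    case False
    then have "x = y"
      using Suc.prems by simp
    then show ?thesis
      using lowest_F_E[of y y] f_u by (simp add: mult_of_nat_left_commute[of f])
  qed
  then have "of_nat (Suc x) * (F (Suc x) * (E y * u)) = 0"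
    by (simp only: f_F)
  then show ?case
    by (rule of_nat_mult_eq_0) simp
qed simp

end

lemma F_Suc_eq_0: "F n * x = 0 \<Longrightarrow> F (Suc n) * x = 0"
  using f_F[of n x] by (auto intro: of_nat_mult_eq_0[of "Suc n"])

lemma F_E_eq_0_above:
  assumes w: "weight_vector z w" and top: "F (Suc K) * w = 0"
  shows "F (Suc K + j) * (E j * w) = 0"
proof (induction j)
  case (Suc j)
  let ?v = "E j * w"
  have "e * (F (Suc (Suc K + j)) * ?v) = F (Suc (Suc K + j)) * (e * ?v)
      + of_int (2 * (z + int j) - int d - int (Suc K + j)) * (F (Suc K + j) * ?v)"
    using w by (intro e_F_weight_vector weight_vector_E)
  then have "F (Suc (Suc K + j)) * (e * ?v) = 0"
    using Suc.IH F_Suc_eq_0[OF Suc.IH] by simp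
  then have "of_nat (Suc j) * (F (Suc K + Suc j) * (E (Suc j) * w)) = 0"
    by (simp only: e_E add_Suc_right mult_of_nat_left_commute[symmetric])
  then show ?case
    by (rule of_nat_mult_eq_0) simp
qed (simp add: top)

lemma fact_F_E_eq_prod:
  assumes w: "weight_vector z w" and top: "F (Suc K) * w = 0"
  shows "of_nat (fact j) * (F (K + j) * (E j * w))
       = of_int (\<Prod>i<j. int d - 2 * z + int K - int i) * (F K * w)"
proof (induction j)
  case (Suc j)
  let ?v = "E j * w" and ?c = "2 * (z + int j) - int d - int (K + j)"
  let ?P = "\<Prod>i<j. int d - 2 * z + int K - int i"
  have "e * (F (Suc (K + j)) * ?v) = F (Suc (K + j)) * (e * ?v) + of_int ?c * (F (K + j) * ?v)"
    using w by (intro e_F_weight_vector weight_vector_E)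
  moreover have "e * (F (Suc (K + j)) * ?v) = 0"
    using F_E_eq_0_above[OF w top, of j] by simp
  ultimately have step: "F (Suc (K + j)) * (e * ?v) = - (of_int ?c * (F (K + j) * ?v))"
    by (simp add: eq_neg_iff_add_eq_0)
  have "fact (Suc j) = fact j * Suc j"
    by simp
  then have "of_nat (fact (Suc j)) * (F (K + Suc j) * (E (Suc j) * w))
      = of_nat (fact j) * (F (Suc (K + j)) * (of_nat (Suc j) * (E (Suc j) * w)))"
    by (simp only: of_nat_mult mult.assoc add_Suc_right mult_of_nat_left_commute[of "F _"])
  also have "\<dots> = of_nat (fact j) * (F (Suc (K + j)) * (e * ?v))"
    by (simp only: e_E)
  also have "\<dots> = - (of_int ?c * (of_nat (fact j) * (F (K + j) * ?v)))"
    by (simp only: step mult_minus_right mult_of_int_left_commute)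
  also have "\<dots> = of_int (?P * (int d - 2 * z + int K - int j)) * (F K * w)"
    by (simp only: Suc.IH of_int_mult_of_int_mult minus_mult_left of_int_minus[symmetric])
      (rule of_int_mult_cong, simp add: algebra_simps)
  finally show ?case
    by (simp only: prod.lessThan_Suc)
qed simp

lemma F_eq_0_beyond_string:
  assumes w: "weight_vector z w" and top: "F (Suc K) * w = 0" and K: "int d - 2 * (z - int K) < int K"
  shows "F K * w = 0"
proof -
  define J where "J = nat (int d - z) + 1"
  have "E J * w = 0"
    using w by (rule E_eq_0) (simp add: J_def)
  then have "of_int (\<Prod>i<J. int d - 2 * z + int K - int i) * (F K * w) = 0"
    using fact_F_E_eq_prod[OF w top, of J] by simp
  moreover have "(\<Prod>i<J. int d - 2 * z + int K - int i) \<noteq> 0"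
    using K by auto
  ultimately show ?thesis
    by (rule of_int_mult_eq_0)
qed

lemma lowest_weight_correction:
  assumes w: "weight_vector z w" and top: "F (Suc K) * w = 0" and K: "int K \<le> int d - 2 * (z - int K)"
  defines "C \<equiv> nat (int d - 2 * (z - int K)) choose K"
  shows "0 < C" and "weight_vector z (w - nat_inv C * (E K * (F K * w)))"
    and "F K * (w - nat_inv C * (E K * (F K * w))) = 0"
proof -
  have f_u: "f * (F K * w) = 0"
    using top by (simp add: f_F)
  have u: "weight_vector (z - int K) (F K * w)"
    using w by (rule weight_vector_F)
  show C: "0 < C"
    using K by (simp add: C_def)
  have "weight_vector z (E K * (F K * w))"
    using weight_vector_E[OF u, of K] by simp
  then show "weight_vector z (w - nat_inv C * (E K * (F K * w)))"
    by (rule weight_vector_diff[OF w weight_vector_commuting[OF nat_inv_commute[OF rat_algebra C]]])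
  have "F K * (E K * (F K * w)) = of_nat C * (F K * w)"
    using lowest_F_E[OF f_u u, of K K] by (simp add: C_def)
  then have "F K * (nat_inv C * (E K * (F K * w))) = F K * w"
    by (simp only: nat_inv_left_commute[OF rat_algebra C] nat_inv_mult_of_nat_mult[OF rat_algebra C])
  then show "F K * (w - nat_inv C * (E K * (F K * w))) = 0"
    by (simp add: right_diff_distrib)
qed

(* Induction on the least K with F K w = 0: u = F (K - 1) w is a lowest weight vector, and
   either w agrees with a multiple of E (K - 1) u modulo the kernel of F (K - 1), or u = 0. *)
lemma weight_vectors_generated_F_height:
  assumes kills: "\<And>k u. f * u = 0 \<Longrightarrow> weight_vector (z - int k) u \<Longrightarrow> X * (E k * u) = 0"
  shows "weight_vector z w \<Longrightarrow> F K * w = 0 \<Longrightarrow> X * w = 0"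
proof (induction K arbitrary: w)
  case (Suc K)
  let ?u = "F K * w" and ?n = "int d - 2 * (z - int K)"
  show ?case
  proof (cases "int K \<le> ?n")
    case True
    let ?C = "nat ?n choose K"
    note correction = lowest_weight_correction[OF Suc.prems True]
    have "X * (w - nat_inv ?C * (E K * ?u)) = 0"
      using correction(2,3) by (rule Suc.IH)
    moreover have "X * (E K * ?u) = 0"
    proof (rule kills)
      show "f * ?u = 0"
        using Suc.prems(2) by (simp add: f_F)
      show "weight_vector (z - int K) ?u"
        using Suc.prems(1) by (rule weight_vector_F)
    qed
    moreover have "X * w = X * (w - nat_inv ?C * (E K * ?u)) + nat_inv ?C * (X * (E K * ?u))"
      by (simp only: right_diff_distrib[of X] nat_inv_left_commute[OF rat_algebra correction(1)]
          diff_add_cancel)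
    ultimately show ?thesis
      by simp
  next
    case False
    have "?u = 0"
      by (rule F_eq_0_beyond_string[OF Suc.prems]) (use False in simp)
    with Suc.prems(1) show ?thesis
      by (rule Suc.IH)
  qed
qed simp

lemma weight_vectors_generated:
  assumes kills: "\<And>k u. f * u = 0 \<Longrightarrow> weight_vector (z - int k) u \<Longrightarrow> X * (E k * u) = 0"
    and w: "weight_vector z w"
  shows "X * w = 0"
proof (cases "z < 0")
  case True
  then show ?thesis
    using weight_vector_eq_0[OF w] by simp
next
  case False
  have "F (nat z + 1) * w = 0"
    by (rule F_eq_0[OF w]) (use False in arith)
  with kills w show ?thesis
    by (rule weight_vectors_generated_F_height)
qed

section \<open>The relators\<close>

(* E (y - j), with divided powers of negative order read as 0 rather than the E 0 = 1 that
   truncated subtraction would give. *)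
definition E_sub :: "nat \<Rightarrow> nat \<Rightarrow> 'a" where
  "E_sub y j = (if j \<le> y then E (y - j) else 0)"

definition relator :: "nat \<Rightarrow> nat \<Rightarrow> nat \<Rightarrow> 'a" where
  "relator x y N = (\<Sum>j\<le>x. of_int (negbin_coeff N j) * (F (x - j) * E_sub y j))"

lemma relator_mult:
  "relator x y N * v = (\<Sum>j\<le>x. of_int (negbin_coeff N j) * (F (x - j) * (E_sub y j * v)))"
  unfolding relator_def by (simp add: sum_distrib_right mult.assoc)

lemma E_sub_Suc_Suc [simp]: "E_sub (Suc y) (Suc j) = E_sub y j"
  by (simp add: E_sub_def)

lemma E_sub_e: "E_sub y j * e = of_int (int y + 1 - int j) * E_sub (Suc y) j"
proof (cases "j \<le> y")
  case True
  then have "E_sub y j * e = of_nat (Suc (y - j)) * E_sub (Suc y) j"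
    by (simp add: E_sub_def dpow_commute[OF rat_algebra] mult_dpow[OF rat_algebra] Suc_diff_le)
  with True show ?thesis
    by (simp add: algebra_simps)
qed (cases "j = Suc y"; simp add: E_sub_def)

lemma relator_e:
  "relator (Suc x) y N * e = of_nat (Suc y) * relator (Suc x) (Suc y) N + of_nat (Suc N) * relator x y (Suc N)"
proof -
  define T where "T j = F (Suc x - j) * E_sub (Suc y) j" for j
  define g where "g j = of_int (negbin_coeff N j * (int y + 1 - int j)) * T j" for j
  define h where "h j = of_int (int (Suc y) * negbin_coeff N j) * T j" for j
  define l where "l j = of_int (int (Suc N) * negbin_coeff (Suc N) j) * T (Suc j)" for j
  have "relator (Suc x) y N * e = (\<Sum>j\<le>Suc x. g j)"
    unfolding relator_def sum_distrib_right g_def T_def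
    by (simp only: mult.assoc E_sub_e mult_of_int_left_commute[of "F _"] of_int_mult_of_int_mult)
  also have "\<dots> = g 0 + (\<Sum>j\<le>x. g (Suc j))"
    by (rule sum.atMost_Suc_shift)
  also have "\<dots> = h 0 + ((\<Sum>j\<le>x. h (Suc j)) + (\<Sum>j\<le>x. l j))"
  proof -
    have "g (Suc j) = h (Suc j) + l j" for j
    proof -
      have "negbin_coeff N (Suc j) * (int y + 1 - int (Suc j))
          = int (Suc y) * negbin_coeff N (Suc j) + int (Suc N) * negbin_coeff (Suc N) j"
        using negbin_coeff_Suc[of j N] by (simp add: algebra_simps)
      then show ?thesis
        unfolding g_def h_def l_def T_def by (simp only: of_int_mult_add diff_Suc_Suc E_sub_Suc_Suc)
    qed
    moreover have "g 0 = h 0"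
      unfolding g_def h_def by (simp add: negbin_coeff_def add.commute)
    ultimately show ?thesis
      by (simp add: sum.distrib)
  qed
  also have "\<dots> = (\<Sum>j\<le>Suc x. h j) + (\<Sum>j\<le>x. l j)"
    by (simp only: sum.atMost_Suc_shift add.assoc)
  also have "(\<Sum>j\<le>Suc x. h j) = of_nat (Suc y) * relator (Suc x) (Suc y) N"
    unfolding relator_def sum_distrib_left h_def T_def
    by (simp only: of_nat_mult_eq_of_int_mult of_int_mult_of_int_mult)
  also have "(\<Sum>j\<le>x. l j) = of_nat (Suc N) * relator x y (Suc N)"
    unfolding relator_def sum_distrib_left l_def T_def
    by (simp only: of_nat_mult_eq_of_int_mult of_int_mult_of_int_mult diff_Suc_Suc E_sub_Suc_Suc)
  finally show ?thesis .
qed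

lemma relator_lowest_le:
  assumes f_u: "f * u = 0" and u: "weight_vector \<mu> u" and "x \<le> y"
  defines "A \<equiv> nat (int d - 2 * \<mu>) - (y - x)"
  shows "relator x y N * u = of_int (\<Sum>j\<le>x. negbin_coeff N j * int (A choose (x - j))) * (E (y - x) * u)"
  unfolding relator_mult of_int_sum sum_distrib_right
proof (rule sum.cong[OF refl])
  fix j
  assume "j \<in> {..x}"
  with \<open>x \<le> y\<close> have "j \<le> y" and "x - j \<le> y - j" and "y - j - (x - j) = y - x"
    by auto
  then have "F (x - j) * (E_sub y j * u) = of_nat (A choose (x - j)) * (E (y - x) * u)"
    using lowest_F_E[OF f_u u] by (simp add: E_sub_def A_def)
  then show "of_int (negbin_coeff N j) * (F (x - j) * (E_sub y j * u))
      = of_int (negbin_coeff N j * int (A choose (x - j))) * (E (y - x) * u)"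
    by (simp only: of_nat_mult_eq_of_int_mult of_int_mult_of_int_mult)
qed

lemma relator_lowest:
  assumes f_u: "f * u = 0" and u: "weight_vector \<mu> u"
    and N: "int N = int d - \<mu> - int y" and x: "\<mu> < int x"
  shows "relator x y N * u = 0"
proof (cases "x \<le> y")
  case True
  let ?A = "nat (int d - 2 * \<mu>) - (y - x)"
  consider "\<mu> < 0" | "int d - 2 * \<mu> < int (y - x)" | "0 \<le> \<mu>" and "int (y - x) \<le> int d - 2 * \<mu>"
    by linarith
  then show ?thesis
  proof cases
    case 1
    then show ?thesis
      using weight_vector_eq_0[OF u] by simp
  next
    case 2
    then show ?thesis
      using relator_lowest_le[OF f_u u True] lowest_E_eq_0[OF f_u u] by simp
  next
    case 3
    then have "Suc N \<le> ?A" and "?A < Suc N + x"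
      using True N x by linarith+
    then have "(\<Sum>j\<le>x. negbin_coeff N j * int (?A choose (x - j))) = 0"
      by (rule negbin_coeff_vandermonde)
    then show ?thesis
      by (simp only: relator_lowest_le[OF f_u u True] of_int_0 mult_zero_left)
  qed
next
  case False
  have "F (x - j) * (E_sub y j * u) = 0" for j
    using False lowest_F_E_eq_0[OF f_u u, of "y - j" "x - j"] by (simp add: E_sub_def)
  then show ?thesis
    by (simp add: relator_mult)
qed

lemma relator_E_lowest:
  assumes f_u: "f * u = 0" and u: "weight_vector \<mu> u"
  shows "int N = int d - (\<mu> + int p) - int y \<Longrightarrow> \<mu> + int p < int x \<Longrightarrow> relator x y N * (E p * u) = 0"
proof (induction p arbitrary: x y N)
  case 0
  then show ?case
    using relator_lowest[OF f_u u] by simp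
next
  case (Suc p)
  show ?case
  proof (cases "\<mu> < 0")
    case True
    then show ?thesis
      using weight_vector_eq_0[OF u] by simp
  next
    case False
    then obtain x' where x: "x = Suc x'"
      using Suc.prems(2) by (cases x) auto
    have "of_nat (Suc p) * (relator x y N * (E (Suc p) * u)) = relator (Suc x') y N * e * (E p * u)"
      unfolding x by (simp only: e_E mult_of_nat_left_commute[of "relator _ _ _"] mult.assoc)
    also have "\<dots> = of_nat (Suc y) * (relator (Suc x') (Suc y) N * (E p * u))
        + of_nat (Suc N) * (relator x' y (Suc N) * (E p * u))"
      by (simp only: relator_e distrib_right mult.assoc)
    also have "\<dots> = 0"
      using Suc.prems x by (simp add: Suc.IH)
    finally show ?thesis
      by (rule of_nat_mult_eq_0) simp
  qed
qed

lemma relator_weight_vector: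
  assumes w: "weight_vector m w" and N: "int N = int d - m - int y" and x: "m < int x"
  shows "relator x y N * w = 0"
  using _ w
proof (rule weight_vectors_generated)
  fix k u
  assume "f * u = 0" and "weight_vector (m - int k) u"
  then show "relator x y N * (E k * u) = 0"
    using N x by (intro relator_E_lowest) (assumption | linarith)+
qed

section \<open>The straightening identity\<close>

lemma binomT_H2_weight_vector:
  assumes "weight_vector z v"
  shows "binomT H2 b * v = of_nat (nat (int d - z) choose b) * v"
proof (cases "int d < z")
  case True
  then show ?thesis
    using weight_vector_eq_0[OF assms] by simp
next
  case False
  then have "H2 * v = of_nat (nat (int d - z)) * v"
    using H2_weight_vector[OF assms] by simp
  then show ?thesis
    by (rule binomT_eigen[OF rat_algebra])
qed

lemma relator_shifted:
  assumes "i \<le> a" and "i \<le> c"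
  shows "relator (a - i) (c - i) (N + i) * w
       = (\<Sum>k=i..min a c. of_int ((-1) ^ (k - i) * int ((N + k) choose (k - i))) * (F (a - k) * (E (c - k) * w)))"
proof -
  define g where "g k = of_int ((-1) ^ (k - i) * int ((N + k) choose (k - i)))
      * (if k \<le> c then F (a - k) * (E (c - k) * w) else 0)" for k
  have "relator (a - i) (c - i) (N + i) * w = (\<Sum>j=0..a - i. g (j + i))"
    unfolding relator_mult atMost_atLeast0
  proof (rule sum.cong[OF refl])
    fix j
    assume "j \<in> {0..a - i}"
    with assms show "of_int (negbin_coeff (N + i) j) * (F (a - i - j) * (E_sub (c - i) j * w)) = g (j + i)"
      by (auto simp: g_def negbin_coeff_def E_sub_def add.commute add.left_commute diff_diff_add)
  qed
  also have "\<dots> = (\<Sum>k=i..a. g k)"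
    using sum.shift_bounds_cl_nat_ivl[of g 0 i "a - i"] assms(1) by simp
  also have "\<dots> = (\<Sum>k=i..min a c. g k)"
    by (rule sum.mono_neutral_right) (auto simp: g_def)
  finally show ?thesis
    by (simp add: g_def)
qed

lemma F_binomT_E_weight_vector:
  assumes "weight_vector m w"
  shows "F x * binomT H2 j * E i * w = of_nat (nat (int d - m - int i) choose j) * (F x * (E i * w))"
  using binomT_H2_weight_vector[OF weight_vector_E[OF assms, of i], of j]
  by (simp add: mult.assoc mult_of_nat_left_commute[of "F x"] diff_diff_add)

lemma F_E_weight_vector_expansion:
  assumes w: "weight_vector m w" and N: "int N = int d - m - int c"
    and s: "0 < s" and s_le: "d + s \<le> a + c + N"
  shows "F a * (E c * w) = (\<Sum>k=s..min a c. of_int (inversion_coeff N s k) * (F (a - k) * (E (c - k) * w)))"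
proof -
  let ?w = "\<lambda>k. F (a - k) * (E (c - k) * w)"
  have "?w 0 = (\<Sum>k=s..min a c. of_int (inversion_coeff N s k) * ?w k)"
  proof (rule triangular_inversion[OF s])
    fix i
    assume "i < s"
    show "(\<Sum>k=i..min a c. of_int ((-1) ^ (k - i) * int ((N + k) choose (k - i))) * ?w k) = 0"
    proof (cases "i \<le> min a c")
      case True
      with \<open>i < s\<close> s_le N have "int (N + i) = int d - m - int (c - i)" and "m < int (a - i)"
        by simp_all
      then have "relator (a - i) (c - i) (N + i) * w = 0"
        by (rule relator_weight_vector[OF w])
      with True show ?thesis
        by (simp add: relator_shifted)
    qed simp
  qed
  then show ?thesis
    by simp
qed

lemma straightening_weight_vector:
  assumes d: "d < a + b + c" and w: "weight_vector m w"
  defines "s \<equiv> a + b + c - d"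
  shows "F a * binomT H2 b * E c * w
       = (\<Sum>k=s..min a c. of_int ((-1) ^ (k - s) * int ((k - 1) choose (s - 1)) * int ((b + k) choose k))
            * (F (a - k) * binomT H2 (b + k) * E (c - k))) * w"
    (is "?L * w = ?R * w")
proof -
  let ?coef = "\<lambda>k. (-1) ^ (k - s) * int ((k - 1) choose (s - 1)) * int ((b + k) choose k)"
  let ?w = "\<lambda>k. F (a - k) * (E (c - k) * w)"
  let ?N = "\<lambda>i. nat (int d - m - int i)"
  have s: "0 < s"
    using d by (simp add: s_def)
  have L: "?L * w = of_nat (?N c choose b) * ?w 0"
    by (simp add: F_binomT_E_weight_vector[OF w])
  have R: "?R * w = (\<Sum>k=s..min a c. of_int (?coef k * int (?N (c - k) choose (b + k))) * ?w k)"
    unfolding sum_distrib_right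
    by (simp only: mult.assoc[of "of_int _"] F_binomT_E_weight_vector[OF w]
        of_nat_mult_eq_of_int_mult[where 'a = 'a] of_int_mult_of_int_mult)
  show ?thesis
  proof (cases "int d - m - int c < int b")
    case True
    have "?L * w = 0"
      using True E_eq_0[OF w, of c] unfolding L by (cases "int d < m + int c") (simp_all add: binomial_eq_0)
    moreover have "?N (c - k) choose (b + k) = 0" if "k \<in> {s..min a c}" for k
      using that True s by (intro binomial_eq_0) auto
    then have "?R * w = 0"
      unfolding R by (intro sum.neutral ballI) (simp del: binomial_eq_0_iff)
    ultimately show ?thesis
      by simp
  next
    case False
    define N where "N = ?N c"
    have N: "int N = int d - m - int c"
      using False by (simp add: N_def)
    have "?L * w = of_nat (N choose b) * (\<Sum>k=s..min a c. of_int (inversion_coeff N s k) * ?w k)"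
      using F_E_weight_vector_expansion[OF w N s] False d N
      by (simp only: L N_def[symmetric]) (simp add: s_def)
    also have "\<dots> = (\<Sum>k=s..min a c. of_int (int (N choose b) * inversion_coeff N s k) * ?w k)"
      by (simp only: sum_distrib_left of_nat_mult_eq_of_int_mult[where 'a = 'a] of_int_mult_of_int_mult)
    also have "\<dots> = ?R * w"
      unfolding R
    proof (rule sum.cong[OF refl], rule of_int_mult_cong)
      fix k
      assume "k \<in> {s..min a c}"
      then have "?N (c - k) = N + k"
        using N by simp
      moreover have "int (N choose b) * int ((N + k) choose k) = int ((b + k) choose k) * int ((N + k) choose (b + k))"
        by (simp only: of_nat_mult[symmetric] choose_mult_shift)
      ultimately show "int (N choose b) * inversion_coeff N s k = ?coef k * int (?N (c - k) choose (b + k))"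
        by (simp add: inversion_coeff_def)
    qed
    finally show ?thesis .
  qed
qed

theorem straightening:
  assumes "d < a + b + c"
  shows "F a * binomT H2 b * E c =
           (\<Sum>k\<in>{a + b + c - d..min a c}.
              of_int ((-1) ^ (k - (a + b + c - d)) * int ((k - 1) choose (a + b + c - d - 1))
                       * int ((b + k) choose k))
              * (F (a - k) * binomT H2 (b + k) * E (c - k)))"
  (is "?L = ?R")
proof -
  have "?L - ?R = 0"
  proof (rule weight_vectors_separate)
    fix z w
    assume "H1 * w = of_int z * w"
    then have "?L * w = ?R * w"
      by (intro straightening_weight_vector[OF assms]) (simp only: weight_vector_def)
    then show "(?L - ?R) * w = 0"
      by (simp only: left_diff_distrib diff_self)
  qed
  then show ?thesis
    by (simp only: right_minus_eq)
qed

end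

theorem theorem6p2:
  fixes e f H1 H2 :: "'a::ring_1" and d a b c :: nat
  assumes "rat_algebra TYPE('a)"
    and "Bd_rel d e f H1 H2"
    and "d < a + b + c"
  shows "dpow f a * binomT H2 b * dpow e c =
           (\<Sum>k\<in>{a + b + c - d..min a c}.
              of_int ((-1) ^ (k - (a + b + c - d)) * int ((k - 1) choose (a + b + c - d - 1))
                       * int ((b + k) choose k))
              * (dpow f (a - k) * binomT H2 (b + k) * dpow e (c - k))) \<and>
         dpow e a * binomT H1 b * dpow f c =
           (\<Sum>k\<in>{a + b + c - d..min a c}.
              of_int ((-1) ^ (k - (a + b + c - d)) * int ((k - 1) choose (a + b + c - d - 1))
                       * int ((b + k) choose k))
              * (dpow e (a - k) * binomT H1 (b + k) * dpow f (c - k)))"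
proof -
  interpret sl2_bounded e f H1 H2 d
    using assms(1,2) by (rule Bd_rel_sl2_bounded)
  interpret swapped: sl2_bounded f e H2 H1 d
    by (rule swapped_sl2_bounded)
  show ?thesis
    using straightening[OF assms(3)] swapped.straightening[OF assms(3)] by blast
qed

end
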